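(* Let $f:[0,1]\to\mathbb{R}$ be continuous on $[0,1]$ and twice differentiable on $(0,1)$, and define $g(t)=f(\tfrac12+t)$ for $t\in[-\tfrac12,\tfrac12]$. Assume: (1) $g^{(2)}(t)>0$ for $-\tfrac12<t<0$, and $g^{(2)}(0)\ge 0$; (2) $g^{(2)}(t)\ge -g^{(2)}(-t)$ for $0<t<\tfrac12$; (3) $\lim_{t\to-1/2}\frac{1}{g^{(2)}(t)}=0$; (4) the function $t\mapsto \frac{1}{g^{(2)}(t)}$ is convex on $[-\tfrac12,0)$ (its value at $-\tfrac12$ being the limit $0$ from (3)). Then $f$ is simplex-convex.
   Context: A function $f:[0,1]\to\mathbb{R}$ is called simplex-convex if for every $n\ge 1$ the function $(p_1,\dots,p_n)\mapsto f(p_1)+\dots+f(p_n)$ is convex on the simplex $\mathrm{Sim}_n(1)=\{(p_1,\dots,p_n): p_i\ge 0,\ \sum_i p_i=1\}$. *)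

theory Defs
  imports "HOL-Analysis.Analysis"
begin

definition Sim :: "nat \<Rightarrow> (nat \<Rightarrow> real) set" where
  "Sim n = {p. (\<forall>i<n. 0 \<le> p i) \<and> (\<forall>i\<ge>n. p i = 0) \<and> (\<Sum>i<n. p i) = 1}"

definition simplex_convex :: "(real \<Rightarrow> real) \<Rightarrow> bool" where
  "simplex_convex f \<longleftrightarrow>
     (\<forall>n\<ge>1. \<forall>p\<in>Sim n. \<forall>q\<in>Sim n. \<forall>u::real. 0 \<le> u \<and> u \<le> 1 \<longrightarrow>
        (\<Sum>i<n. f (u * p i + (1 - u) * q i))
          \<le> u * (\<Sum>i<n. f (p i)) + (1 - u) * (\<Sum>i<n. f (q i)))"

end

theory Submission
  imports Defs
begin

text \<open>Along a segment \<open>s \<mapsto> (1 - s) q + s p\<close> in the simplex, the second derivative of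
  \<open>\<Sum>i. f (x i)\<close> is the form \<open>\<Sum>i. f'' (x i) * (v i)\<^sup>2\<close> with \<open>\<Sum>i. v i = 0\<close>.
  A weight \<open>f'' (x i)\<close> can only be negative when \<open>x i > 1/2\<close>, which happens for at most one
  index \<open>k\<close>, and by (2) that weight is at least \<open>- f'' z\<close> for \<open>z = 1 - x k\<close>. The remaining
  coordinates sum to at most \<open>z < 1/2\<close>; since \<open>1 / f''\<close> is convex and vanishes at the left
  end point, \<open>1 / f'' y \<le> y / z * (1 / f'' z)\<close>, hence \<open>\<Sum>i\<noteq>k. 1 / f'' (x i) \<le> 1 / f'' z\<close>,
  and Cauchy-Schwarz yields \<open>f'' z * (v k)\<^sup>2 \<le> (\<Sum>i\<noteq>k. f'' (x i) * (v i)\<^sup>2)\<close>.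
  So the sum is convex on the open segment, and by continuity on the closed one.\<close>

lemma convex_on_Icc_if_convex_on_open:
  fixes g :: "real \<Rightarrow> real"
  assumes cont: "continuous_on {a..b} g" and conv: "convex_on {a<..<b} g"
  shows "convex_on {a..b} g"
proof (cases "a < b")
  case False
  show ?thesis
  proof (rule convex_onI)
    fix t x y assume "x \<in> {a..b}" "y \<in> {a..b}"
    then have "y = x" using False by auto
    then show "g ((1 - t) *\<^sub>R x + t *\<^sub>R y) \<le> (1 - t) * g x + t * g y"
      by (simp add: distrib_right[symmetric])
  qed simp
next
  case True
  \<comment> \<open>Push all points slightly towards the midpoint and let the push tend to 0.\<close>
  define m where "m = (a + b) / 2"
  have m: "m \<in> {a<..<b}" using True by (simp add: m_def)
  have shrink: "(1 - e) * w + e * m \<in> {a<..<b}" if "w \<in> {a..b}" "0 < e" "e \<le> 1" for w e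
  proof -
    have "(1 - e) * a \<le> (1 - e) * w" "(1 - e) * w \<le> (1 - e) * b"
      using that by (simp_all add: mult_left_mono)
    moreover have "e * a < e * m" "e * m < e * b" using that m by simp_all
    moreover have "(1 - e) * a + e * a = a" "(1 - e) * b + e * b = b"
      by (simp_all add: left_diff_distrib)
    ultimately show ?thesis by simp
  qed
  have lim: "((\<lambda>e. g ((1 - e) * w + e * m)) \<longlongrightarrow> g w) (at_right 0)" if "w \<in> {a..b}" for w
  proof -
    have "(1 - e) * w + e * m \<in> {a..b}" if "e \<in> {0..1}" for e
      using shrink[OF \<open>w \<in> {a..b}\<close>, of e] \<open>w \<in> {a..b}\<close> that by (cases "e = 0") auto
    then have "continuous_on {0..1} (\<lambda>e. g ((1 - e) * w + e * m))"
      by (intro continuous_on_compose2[OF cont]) (auto intro!: continuous_intros)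
    then have "((\<lambda>e. g ((1 - e) * w + e * m)) \<longlongrightarrow> g ((1 - 0) * w + 0 * m)) (at 0 within {0..1})"
      unfolding continuous_on_def by (rule bspec) simp
    then show ?thesis by (simp add: at_within_Icc_at_right)
  qed
  show ?thesis
  proof (rule convex_onI)
    show "convex {a..b}" by simp
    fix t x y :: real assume t: "0 < t" "t < 1" and xy: "x \<in> {a..b}" "y \<in> {a..b}"
    let ?z = "(1 - t) * x + t * y"
    have z: "?z \<in> {a..b}" using convexD[OF convex_real_interval(5) xy, of "1 - t" t] t by simp
    have "\<forall>\<^sub>F e in at_right 0. g ((1 - e) * ?z + e * m)
        \<le> (1 - t) * g ((1 - e) * x + e * m) + t * g ((1 - e) * y + e * m)"
      unfolding eventually_at_right_field
    proof (intro exI[of _ 1] conjI allI impI)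
      fix e :: real assume e: "0 < e" "e < 1"
      have "(1 - e) * ?z + e * m = (1 - t) * ((1 - e) * x + e * m) + t * ((1 - e) * y + e * m)"
        by algebra
      then show "g ((1 - e) * ?z + e * m)
          \<le> (1 - t) * g ((1 - e) * x + e * m) + t * g ((1 - e) * y + e * m)"
        using convex_onD[OF conv, of t] shrink xy e t by simp
    qed simp
    moreover have "((\<lambda>e. (1 - t) * g ((1 - e) * x + e * m) + t * g ((1 - e) * y + e * m))
        \<longlongrightarrow> (1 - t) * g x + t * g y) (at_right 0)"
      using lim xy by (intro tendsto_intros) auto
    ultimately have "g ?z \<le> (1 - t) * g x + t * g y"
      using tendsto_le[OF trivial_limit_at_right_real _ lim[OF z]] by blast
    then show "g ((1 - t) *\<^sub>R x + t *\<^sub>R y) \<le> (1 - t) * g x + t * g y"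
      by simp
  qed
qed

lemma convex_combination_in_open_interval:
  fixes a b s :: real
  assumes "a \<in> {l..u}" "b \<in> {l..u}" "a \<noteq> b" "0 < s" "s < 1"
  shows "(1 - s) * a + s * b \<in> {l<..<u}"
proof -
  have "(1 - s) * a + s * b \<in> open_segment a b"
    using assms by (auto simp: in_segment)
  then show ?thesis using assms by (auto simp: open_segment_eq_real_ivl split: if_splits)
qed

lemma convex_on_le_scaled_from_zero:
  fixes \<phi> :: "real \<Rightarrow> real"
  assumes conv: "convex_on {a..<b} \<phi>" and zero: "\<phi> a = 0"
    and c: "a < c" "c < b" and t: "0 \<le> t" "t \<le> 1"
  shows "\<phi> (a + t * (c - a)) \<le> t * \<phi> c"
proof -
  have "\<phi> ((1 - t) * a + t * c) \<le> (1 - t) * \<phi> a + t * \<phi> c"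
    using convex_onD[OF conv t] c by simp
  moreover have "(1 - t) * a + t * c = a + t * (c - a)" by algebra
  ultimately show ?thesis using zero by simp
qed

lemma square_sum_le_weighted_sum_squares:
  fixes a v :: "'i \<Rightarrow> real"
  assumes a: "\<And>i. i \<in> S \<Longrightarrow> 0 < a i"
  shows "(\<Sum>i\<in>S. v i)\<^sup>2 \<le> (\<Sum>i\<in>S. a i * (v i)\<^sup>2) * (\<Sum>i\<in>S. 1 / a i)"
proof -
  have "(\<Sum>i\<in>S. (sqrt (a i) * v i) * (1 / sqrt (a i)))\<^sup>2
      \<le> (\<Sum>i\<in>S. (sqrt (a i) * v i)\<^sup>2) * (\<Sum>i\<in>S. (1 / sqrt (a i))\<^sup>2)"
    by (rule Cauchy_Schwarz_ineq_sum)
  moreover have "(\<Sum>i\<in>S. (sqrt (a i) * v i) * (1 / sqrt (a i))) = (\<Sum>i\<in>S. v i)"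
    "(\<Sum>i\<in>S. (sqrt (a i) * v i)\<^sup>2) = (\<Sum>i\<in>S. a i * (v i)\<^sup>2)"
    "(\<Sum>i\<in>S. (1 / sqrt (a i))\<^sup>2) = (\<Sum>i\<in>S. 1 / a i)"
    by (auto intro!: sum.cong simp: power_mult_distrib power_divide less_imp_le dest: a)
  ultimately show ?thesis by simp
qed

lemma weighted_sum_squares_nonneg:
  fixes a v :: "'i \<Rightarrow> real"
  assumes I: "finite I" "k \<in> I" and v: "(\<Sum>i\<in>I. v i) = 0"
    and a: "\<And>i. i \<in> I - {k} \<Longrightarrow> 0 < a i" and b: "0 < b" "- b \<le> a k"
    and inv: "(\<Sum>i\<in>I - {k}. 1 / a i) \<le> 1 / b"
  shows "0 \<le> (\<Sum>i\<in>I. a i * (v i)\<^sup>2)"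
proof -
  let ?S = "I - {k}"
  have vk: "v k = - (\<Sum>i\<in>?S. v i)" and sum: "(\<Sum>i\<in>I. a i * (v i)\<^sup>2) = a k * (v k)\<^sup>2 + (\<Sum>i\<in>?S. a i * (v i)\<^sup>2)"
    using v I by (simp_all add: sum.remove)
  have "0 \<le> (\<Sum>i\<in>?S. a i * (v i)\<^sup>2)"
    using a by (intro sum_nonneg) (simp add: less_imp_le)
  then have "b * (v k)\<^sup>2 \<le> b * ((\<Sum>i\<in>?S. a i * (v i)\<^sup>2) * (\<Sum>i\<in>?S. 1 / a i))"
    using square_sum_le_weighted_sum_squares[of ?S a v] a b vk by simp
  also have "\<dots> \<le> b * ((\<Sum>i\<in>?S. a i * (v i)\<^sup>2) * (1 / b))"
    using inv b \<open>0 \<le> (\<Sum>i\<in>?S. a i * (v i)\<^sup>2)\<close> by (intro mult_left_mono) auto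
  finally have "b * (v k)\<^sup>2 \<le> (\<Sum>i\<in>?S. a i * (v i)\<^sup>2)" using b by simp
  moreover have "- b * (v k)\<^sup>2 \<le> a k * (v k)\<^sup>2" using b by (intro mult_right_mono) auto
  ultimately show ?thesis using sum by linarith
qed

lemma sum_le_if_below_ray:
  fixes \<phi> :: "real \<Rightarrow> real" and x :: "'i \<Rightarrow> real"
  assumes ray: "\<And>y. 0 < y \<Longrightarrow> y \<le> z \<Longrightarrow> \<phi> y \<le> y / z * \<phi> z" and "0 \<le> \<phi> z"
    and J: "finite J" "\<And>i. i \<in> J \<Longrightarrow> 0 < x i" and sum: "(\<Sum>i\<in>J. x i) \<le> z"
  shows "(\<Sum>i\<in>J. \<phi> (x i)) \<le> \<phi> z"
proof -
  have "x i \<le> z" if "i \<in> J" for i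
    using member_le_sum[of i J x] J that sum by (auto simp: less_imp_le)
  then have "(\<Sum>i\<in>J. \<phi> (x i)) \<le> (\<Sum>i\<in>J. x i / z * \<phi> z)"
    using ray J by (intro sum_mono) auto
  also have "\<dots> = (\<Sum>i\<in>J. x i) / z * \<phi> z"
    by (simp add: sum_distrib_right sum_divide_distrib)
  also have "\<dots> \<le> \<phi> z"
  proof (rule mult_left_le_one_le)
    have "0 \<le> (\<Sum>i\<in>J. x i)" using J by (intro sum_nonneg) (simp add: less_imp_le)
    then show "0 \<le> (\<Sum>i\<in>J. x i) / z" "(\<Sum>i\<in>J. x i) / z \<le> 1"
      using sum by (auto simp: divide_le_eq_1)
  qed fact
  finally show ?thesis .
qed

lemma Sim_sum_le_one:
  assumes "x \<in> Sim n" "J \<subseteq> {..<n}"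
  shows "(\<Sum>i\<in>J. x i) \<le> 1"
  using sum_mono2[of "{..<n}" J x] assms by (auto simp: Sim_def)

lemma Sim_convex_combination:
  assumes "p \<in> Sim n" "q \<in> Sim n" "0 \<le> s" "s \<le> 1"
  shows "(\<lambda>i. (1 - s) * q i + s * p i) \<in> Sim n"
  using assms by (auto simp: Sim_def sum.distrib sum_distrib_left[symmetric])

lemma second_derivative_form_nonneg:
  fixes f'' :: "real \<Rightarrow> real" and x v :: "nat \<Rightarrow> real"
  assumes pos: "\<And>y. 0 < y \<Longrightarrow> y < 1/2 \<Longrightarrow> 0 < f'' y"
    and half: "0 \<le> f'' (1/2)"
    and mirror: "\<And>y. 1/2 < y \<Longrightarrow> y < 1 \<Longrightarrow> - f'' (1 - y) \<le> f'' y"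
    and inv: "\<And>y z. 0 < y \<Longrightarrow> y \<le> z \<Longrightarrow> z < 1/2 \<Longrightarrow> 1 / f'' y \<le> y / z * (1 / f'' z)"
    and x_Sim: "x \<in> Sim n" and v: "(\<Sum>i<n. v i) = 0"
    and supp: "\<And>i. i < n \<Longrightarrow> v i \<noteq> 0 \<Longrightarrow> 0 < x i \<and> x i < 1"
  shows "0 \<le> (\<Sum>i<n. f'' (x i) * (v i)\<^sup>2)"
proof -
  \<comment> \<open>Indices with \<open>v i = 0\<close> may sit at 0 or 1, where nothing is known about \<open>f''\<close>.\<close>
  let ?I = "{i. i < n \<and> v i \<noteq> 0}"
  have restrict: "(\<Sum>i<n. f'' (x i) * (v i)\<^sup>2) = (\<Sum>i\<in>?I. f'' (x i) * (v i)\<^sup>2)"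
    by (intro sum.mono_neutral_right) auto
  have "(\<Sum>i<n. v i) = (\<Sum>i\<in>?I. v i)"
    by (intro sum.mono_neutral_right) auto
  with v have v_I: "(\<Sum>i\<in>?I. v i) = 0" by simp
  have "0 \<le> (\<Sum>i\<in>?I. f'' (x i) * (v i)\<^sup>2)"
  proof (cases "\<exists>k\<in>?I. 1/2 < x k")
    case False
    have "0 \<le> f'' (x i)" if "i \<in> ?I" for i
    proof (cases "x i = 1/2")
      case True
      then show ?thesis using half by (simp only:)
    next
      case False
      then show ?thesis using pos[of "x i"] supp[of i] \<open>\<not> (\<exists>k\<in>?I. 1/2 < x k)\<close> that by auto
    qed
    then show ?thesis by (intro sum_nonneg) simp
  next
    case True
    then obtain k where k: "k \<in> ?I" "1/2 < x k" by auto
    define z where "z = 1 - x k"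
    have z: "0 < z" "z < 1/2" using supp k unfolding z_def by auto
    have "x k + (\<Sum>i\<in>?I - {k}. x i) \<le> 1"
      using Sim_sum_le_one[OF x_Sim, of ?I] k by (auto simp: sum.remove)
    then have sum_rest: "(\<Sum>i\<in>?I - {k}. x i) \<le> z" by (simp add: z_def)
    have small: "0 < x i \<and> x i \<le> z" if "i \<in> ?I - {k}" for i
      using member_le_sum[of i "?I - {k}" x] supp[of i] sum_rest that x_Sim by (auto simp: Sim_def)
    have inv_sum: "(\<Sum>i\<in>?I - {k}. 1 / f'' (x i)) \<le> 1 / f'' z"
    proof (rule sum_le_if_below_ray[where \<phi> = "\<lambda>y. 1 / f'' y"])
      show "1 / f'' y \<le> y / z * (1 / f'' z)" if "0 < y" "y \<le> z" for y
        using inv that z by simp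
      show "0 \<le> 1 / f'' z" using pos[of z] z by simp
    qed (use small sum_rest in auto)
    show ?thesis
    proof (rule weighted_sum_squares_nonneg[OF _ k(1) v_I _ _ _ inv_sum])
      show "0 < f'' (x i)" if "i \<in> ?I - {k}" for i
        using pos small[OF that] z by auto
      show "0 < f'' z" using pos z by auto
      show "- f'' z \<le> f'' (x k)" using mirror[of "x k"] k supp unfolding z_def by auto
    qed simp
  qed
  then show ?thesis using restrict by simp
qed

lemma convex_on_sum_comp_segment:
  fixes f f' f'' :: "real \<Rightarrow> real" and p q :: "'i \<Rightarrow> real"
  assumes cont: "continuous_on {0..1} f"
    and deriv1: "\<And>x. x \<in> {0<..<1} \<Longrightarrow> (f has_real_derivative f' x) (at x)"
    and deriv2: "\<And>x. x \<in> {0<..<1} \<Longrightarrow> (f' has_real_derivative f'' x) (at x)"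
    and pq: "\<And>i. i \<in> I \<Longrightarrow> p i \<in> {0..1} \<and> q i \<in> {0..1}"
    and nonneg: "\<And>s. s \<in> {0<..<1} \<Longrightarrow> 0 \<le> (\<Sum>i\<in>I. f'' ((1 - s) * q i + s * p i) * (p i - q i)\<^sup>2)"
  shows "convex_on {0..1} (\<lambda>s. \<Sum>i\<in>I. f ((1 - s) * q i + s * p i))"
proof (rule convex_on_Icc_if_convex_on_open)
  have in01: "(1 - s) * q i + s * p i \<in> {0..1}" if "i \<in> I" "s \<in> {0..1}" for i s
    using convexD[of "{0..1::real}" "q i" "p i" "1 - s" s] pq[OF \<open>i \<in> I\<close>] that by auto
  show "continuous_on {0..1} (\<lambda>s. \<Sum>i\<in>I. f ((1 - s) * q i + s * p i))"
    by (intro continuous_on_sum continuous_on_compose2[OF cont]) (auto intro!: continuous_intros in01)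
  have seg: "p i = q i \<or> (1 - s) * q i + s * p i \<in> {0<..<1}"
    if "i \<in> I" "s \<in> {0<..<1}" for i s
    using convex_combination_in_open_interval[of "q i" 0 1 "p i" s] pq that by force
  have term': "((\<lambda>s. f ((1 - s) * q i + s * p i)) has_real_derivative
      f' ((1 - s) * q i + s * p i) * (p i - q i)) (at s)"
    if "i \<in> I" "s \<in> {0<..<1}" for i s
    using seg[OF that]
    by (elim disjE) (simp add: left_diff_distrib, auto intro!: derivative_eq_intros DERIV_chain2[OF deriv1])
  have term'': "((\<lambda>s. f' ((1 - s) * q i + s * p i) * (p i - q i)) has_real_derivative
      f'' ((1 - s) * q i + s * p i) * (p i - q i)\<^sup>2) (at s)"
    if "i \<in> I" "s \<in> {0<..<1}" for i s
    using seg[OF that]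
    by (elim disjE) (simp add: left_diff_distrib,
        auto simp: power2_eq_square algebra_simps intro!: derivative_eq_intros DERIV_chain2[OF deriv2])
  show "convex_on {0<..<1} (\<lambda>s. \<Sum>i\<in>I. f ((1 - s) * q i + s * p i))"
    by (rule f''_ge0_imp_convex[where f' = "\<lambda>s. \<Sum>i\<in>I. f' ((1 - s) * q i + s * p i) * (p i - q i)"
          and f'' = "\<lambda>s. \<Sum>i\<in>I. f'' ((1 - s) * q i + s * p i) * (p i - q i)\<^sup>2"])
       (auto intro!: DERIV_sum term' term'' nonneg)
qed

theorem theorem5p5:
  fixes f f' f'' :: "real \<Rightarrow> real"
  assumes cont: "continuous_on {0..1} f"
    and d1: "\<And>x. x \<in> {0<..<1} \<Longrightarrow> (f has_real_derivative f' x) (at x)"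
    and d2: "\<And>x. x \<in> {0<..<1} \<Longrightarrow> (f' has_real_derivative f'' x) (at x)"
    and h1a: "\<And>t. -1/2 < t \<Longrightarrow> t < 0 \<Longrightarrow> f'' (1/2 + t) > 0"
    and h1b: "f'' (1/2) \<ge> 0"
    and h2: "\<And>t. 0 < t \<Longrightarrow> t < 1/2 \<Longrightarrow> f'' (1/2 + t) \<ge> - f'' (1/2 - t)"
    and h3: "((\<lambda>t. 1 / f'' (1/2 + t)) \<longlongrightarrow> 0) (at_right (-1/2))"
    and h4: "convex_on {-1/2..<0} (\<lambda>t. if t = -1/2 then 0 else 1 / f'' (1/2 + t))"
  shows "simplex_convex f"
  unfolding simplex_convex_def
proof (intro allI impI ballI)
  fix n :: nat and p q and u :: real
  assume p: "p \<in> Sim n" and q: "q \<in> Sim n" and u: "0 \<le> u \<and> u \<le> 1"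
  have pos: "0 < f'' y" if "0 < y" "y < 1/2" for y
    using h1a[of "y - 1/2"] that by simp
  have mirror: "- f'' (1 - y) \<le> f'' y" if "1/2 < y" "y < 1" for y
    using h2[of "y - 1/2"] that by simp
  have inv: "1 / f'' y \<le> y / z * (1 / f'' z)" if "0 < y" "y \<le> z" "z < 1/2" for y z
    using convex_on_le_scaled_from_zero[OF h4, of "z - 1/2" "y / z"] that by simp
  have in01: "p i \<in> {0..1} \<and> q i \<in> {0..1}" if "i \<in> {..<n}" for i
    using Sim_sum_le_one[of _ n "{i}"] p q that by (auto simp: Sim_def)
  have "convex_on {0..1} (\<lambda>s. \<Sum>i<n. f ((1 - s) * q i + s * p i))"
  proof (rule convex_on_sum_comp_segment[OF cont d1 d2 in01])
    fix s :: real assume s: "s \<in> {0<..<1}"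
    show "0 \<le> (\<Sum>i<n. f'' ((1 - s) * q i + s * p i) * (p i - q i)\<^sup>2)"
    proof (rule second_derivative_form_nonneg[OF pos h1b mirror inv Sim_convex_combination[OF p q]])
      show "(\<Sum>i<n. p i - q i) = 0" using p q by (simp add: Sim_def sum_subtractf)
      show "0 < (1 - s) * q i + s * p i \<and> (1 - s) * q i + s * p i < 1" if "i < n" "p i - q i \<noteq> 0" for i
        using convex_combination_in_open_interval[of "q i" 0 1 "p i" s] in01[of i] that s by auto
    qed (use s in auto)
  qed
  from convex_onD[OF this, of u 0 1] u
  show "(\<Sum>i<n. f (u * p i + (1 - u) * q i)) \<le> u * (\<Sum>i<n. f (p i)) + (1 - u) * (\<Sum>i<n. f (q i))"
    by (simp add: add.commute)
qed

end
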